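(* Let $G$ be the graph consisting of countably many paths $P_1,P_2,\dots$ which pairwise have exactly one vertex $u$ in common, $u$ being the first vertex of each $P_i$, where $P_i$ has $2i$ edges; weight the edges of each $P_i$ alternately $0$ and $1$, starting with weight $0$ on the edge of $P_i$ at $u$. Then $G$ has an almost perfect matching, but $G$ has no matching that is a strongly $w$-minimal perfect or almost perfect matching.
   Context: A matching is perfect if every vertex is covered by it, and almost perfect if exactly one vertex is not covered. For a set $F$ of edges, $w[F]:=\sum_{e\in F}w(e)$. A perfect or almost perfect matching $M$ is strongly $w$-minimal (among perfect and almost perfect matchings) if there is no perfect or almost perfect matching $N$ with $|M\setminus N|,|N\setminus M|<\infty$ and $w[N\setminus M]<w[M\setminus N]$. *)

theory Defs
  imports Complex_Main
begin

text \<open>A graph is given by a vertex set V and a set E of edges, each edge a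
2-element subset of V. Weights are functions on edges.\<close>

definition matching :: "'a set set \<Rightarrow> 'a set set \<Rightarrow> bool" where
  "matching E M \<longleftrightarrow> M \<subseteq> E \<and> (\<forall>e\<in>M. \<forall>f\<in>M. e \<noteq> f \<longrightarrow> e \<inter> f = {})"

definition perfect_matching :: "'a set \<Rightarrow> 'a set set \<Rightarrow> 'a set set \<Rightarrow> bool" where
  "perfect_matching V E M \<longleftrightarrow> matching E M \<and> V \<subseteq> \<Union>M"

definition almost_perfect_matching :: "'a set \<Rightarrow> 'a set set \<Rightarrow> 'a set set \<Rightarrow> bool" where
  "almost_perfect_matching V E M \<longleftrightarrow> matching E M \<and> (\<exists>v. V - \<Union>M = {v})"

definition wsum :: "('a set \<Rightarrow> real) \<Rightarrow> 'a set set \<Rightarrow> real" where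
  "wsum w F = (\<Sum>e\<in>F. w e)"

definition strongly_w_minimal ::
  "'a set \<Rightarrow> 'a set set \<Rightarrow> ('a set \<Rightarrow> real) \<Rightarrow> 'a set set \<Rightarrow> bool" where
  "strongly_w_minimal V E w M \<longleftrightarrow>
     (perfect_matching V E M \<or> almost_perfect_matching V E M) \<and>
     \<not> (\<exists>N. (perfect_matching V E N \<or> almost_perfect_matching V E N) \<and>
            finite (M - N) \<and> finite (N - M) \<and> wsum w (N - M) < wsum w (M - N))"

text \<open>The common vertex u is (0,0); the path
P_i (i \<ge> 1) has vertices u = pv i 0, pv i 1 = (i,1), ..., pv i (2i) = (i,2i),
and edges pedge i k = {pv i k, pv i (k+1)} for k < 2i.\<close>

definition pv :: "nat \<Rightarrow> nat \<Rightarrow> nat \<times> nat" where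
  "pv i k = (if k = 0 then (0, 0) else (i, k))"

definition pedge :: "nat \<Rightarrow> nat \<Rightarrow> (nat \<times> nat) set" where
  "pedge i k = {pv i k, pv i (Suc k)}"

definition exV :: "(nat \<times> nat) set" where
  "exV = {pv i k | i k. 1 \<le> i \<and> k \<le> 2 * i}"

definition exE :: "(nat \<times> nat) set set" where
  "exE = {pedge i k | i k. 1 \<le> i \<and> k < 2 * i}"

definition exw :: "(nat \<times> nat) set \<Rightarrow> real" where
  "exw e = (if \<exists>i k. 1 \<le> i \<and> k < 2 * i \<and> odd k \<and> e = pedge i k then 1 else 0)"

end

theory Submission
  imports Defs
begin

text \<open>
  The graph consists of paths P_1, P_2, ... glued at their first vertex u = (0,0) (the hub);
  P_i has inner vertices (i,1), ..., (i,2i) and edges pedge i t, t < 2i, of weight t mod 2.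
  The odd edges of all paths form an almost perfect matching missing only u.

  For the negative part we use one general device: given a matching M and a finite matching B,
  swap M B replaces the edges of M meeting B by B.  If the result misses exactly one vertex and
  B is lighter than some set of the replaced edges, M is not strongly w-minimal.
  Let M be a perfect or almost perfect matching.
  (a) If u is uncovered, the edge (1,1)-(1,2) of weight 1 is in M; swapping in the weight-0
      edge u-(1,1) improves M.
  (b) If u is covered by the first edge of P_j, then on every other path P_i a parity argument
      (a matching covers an even number of vertices) shows that all inner vertices are
      covered, which forces all i odd edges of P_i into M.  For k = j+1 we swap in the odd
      edges of P_j (weight j) and the even edges of P_k (weight 0); this displaces the k odd
      edges of P_k and leaves only (k,2k) uncovered.
\<close>

lemma matching_edge_unique:
  assumes "matching E M" "e \<in> M" "f \<in> M" "x \<in> e" "x \<in> f"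
  shows "e = f"
  using assms unfolding matching_def by blast

lemma matching_edge_in: "matching E M \<Longrightarrow> e \<in> M \<Longrightarrow> e \<in> E"
  unfolding matching_def by blast

lemma matchingI:
  assumes "M \<subseteq> E" "\<And>e f x. e \<in> M \<Longrightarrow> f \<in> M \<Longrightarrow> x \<in> e \<Longrightarrow> x \<in> f \<Longrightarrow> e = f"
  shows "matching E M"
  using assms unfolding matching_def by blast

lemma card_Union_matching:
  assumes "matching E M" "finite M" "\<forall>e\<in>M. card e = 2"
  shows "card (\<Union>M) = 2 * card M"
proof -
  have "pairwise disjnt M"
    using assms(1) unfolding matching_def pairwise_def disjnt_def by blast
  moreover have "\<And>e. e \<in> M \<Longrightarrow> finite e"
    using assms(3) by (metis card.infinite zero_neq_numeral)
  ultimately have "card (\<Union>M) = sum card M" by (rule card_Union_disjoint)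
  also have "\<dots> = 2 * card M" using assms(3) by simp
  finally show ?thesis .
qed

definition displaced :: "'a set set \<Rightarrow> 'a set set \<Rightarrow> 'a set set" where
  "displaced M B = {e \<in> M. e \<inter> \<Union>B \<noteq> {}}"

definition swap :: "'a set set \<Rightarrow> 'a set set \<Rightarrow> 'a set set" where
  "swap M B = (M - displaced M B) \<union> B"

lemma matching_swap:
  assumes "matching E M" "matching E B"
  shows "matching E (swap M B)"
  unfolding matching_def
proof (intro conjI ballI impI)
  show "swap M B \<subseteq> E"
    using assms unfolding matching_def swap_def by blast
next
  fix e f assume e: "e \<in> swap M B" and f: "f \<in> swap M B" and "e \<noteq> f"
  have kept: "e \<inter> f = {}" if "e \<in> M - displaced M B" "f \<in> B" for e f
    using that unfolding displaced_def by blast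
  consider "e \<in> M" "f \<in> M" | "e \<in> B" "f \<in> B"
    | "e \<in> M - displaced M B" "f \<in> B" | "f \<in> M - displaced M B" "e \<in> B"
    using e f unfolding swap_def by blast
  then show "e \<inter> f = {}"
  proof cases
    case 1 then show ?thesis using assms(1) \<open>e \<noteq> f\<close> unfolding matching_def by blast
  next
    case 2 then show ?thesis using assms(2) \<open>e \<noteq> f\<close> unfolding matching_def by blast
  next
    case 3 then show ?thesis by (rule kept)
  next
    case 4 then show ?thesis using kept by blast
  qed
qed

text \<open>Since every vertex lies on at most one edge of M, a finite B displaces only finitely many
  edges; hence a swap is always a finite modification.\<close>
lemma finite_displaced:
  assumes M: "matching E M" and S: "finite (\<Union>B)"
  shows "finite (displaced M B)"
proof -
  have sub: "displaced M B \<subseteq> (\<Union>x\<in>\<Union>B. {e \<in> M. x \<in> e})"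
    unfolding displaced_def by blast
  have single: "finite {e \<in> M. x \<in> e}" for x
  proof -
    have "{e \<in> M. x \<in> e} \<subseteq> {e0}" if "e0 \<in> M" "x \<in> e0" for e0
      using matching_edge_unique[OF M _ that(1) _ that(2)] by blast
    then show ?thesis by (metis (no_types, lifting) empty_Collect_eq finite.emptyI finite_subset
      finite.insertI)
  qed
  have "finite (\<Union>x\<in>\<Union>B. {e \<in> M. x \<in> e})"
    using S single by (rule finite_UN_I)
  then show ?thesis using sub finite_subset by blast
qed

lemma mem_Union_swap: "x \<in> \<Union>(swap M B) \<longleftrightarrow> x \<in> \<Union>B \<or> (\<exists>e\<in>M. x \<in> e \<and> e \<inter> \<Union>B = {})"
  unfolding swap_def displaced_def by blast

lemma swap_improves:
  fixes w :: "'a set \<Rightarrow> real"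
  assumes M: "matching E M" and B: "matching E B" "finite B" "\<forall>e\<in>B. finite e"
    and nonneg: "\<forall>e. w e \<ge> 0"
    and one_uncovered: "V - \<Union>(swap M B) = {z}"
    and F: "F \<subseteq> displaced M B - B" and lighter: "wsum w B < wsum w F"
  shows "\<not> strongly_w_minimal V E w M"
proof -
  let ?N = "swap M B"
  have MN: "M - ?N = displaced M B - B" and NM: "?N - M \<subseteq> B"
    unfolding swap_def displaced_def by auto
  have "finite (displaced M B)" using finite_displaced[OF M] B by blast
  then have fin: "finite (M - ?N)" "finite (?N - M)"
    unfolding MN using finite_subset[OF NM] B by auto
  have apm: "almost_perfect_matching V E ?N"
    using matching_swap[OF M B(1)] one_uncovered unfolding almost_perfect_matching_def by blast
  have "wsum w (?N - M) \<le> wsum w B"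
    unfolding wsum_def using B(2) NM nonneg by (intro sum_mono2) auto
  also have "\<dots> < wsum w F" by (fact lighter)
  also have "\<dots> \<le> wsum w (M - ?N)"
    using fin(1) F nonneg unfolding wsum_def MN by (intro sum_mono2) auto
  finally show ?thesis unfolding strongly_w_minimal_def using apm fin by blast
qed

lemma pedge_eq: "pedge i t = {if t = 0 then (0, 0) else (i, t), (i, Suc t)}"
  by (simp add: pedge_def pv_def)

lemma mem_pedge:
  "x \<in> pedge i t \<longleftrightarrow> (t = 0 \<and> x = (0, 0)) \<or> (0 < t \<and> x = (i, t)) \<or> x = (i, Suc t)"
  by (auto simp: pedge_eq)

lemma pedge_inj: "pedge i t = pedge i' t' \<longleftrightarrow> i = i' \<and> t = t'"
proof
  assume eq: "pedge i t = pedge i' t'"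
  have "(i, Suc t) \<in> pedge i t" "(i', Suc t') \<in> pedge i' t'"
    by (simp_all add: pedge_eq)
  then have "(i, Suc t) \<in> pedge i' t'" "(i', Suc t') \<in> pedge i t"
    unfolding eq by simp_all
  then show "i = i' \<and> t = t'" by (auto simp: mem_pedge)
qed simp

lemma pedge_in_exE: "pedge i t \<in> exE \<longleftrightarrow> 1 \<le> i \<and> t < 2 * i"
  by (auto simp: exE_def pedge_inj)

lemma exV_iff: "(a, b) \<in> exV \<longleftrightarrow> (a, b) = (0, 0) \<or> (1 \<le> a \<and> 1 \<le> b \<and> b \<le> 2 * a)"
  unfolding exV_def pv_def by (cases "b = 0") (auto intro: exI[of _ 1])

lemma exw_pedge: "1 \<le> i \<Longrightarrow> t < 2 * i \<Longrightarrow> exw (pedge i t) = (if odd t then 1 else 0)"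
  unfolding exw_def pedge_inj by auto

lemma exw_nonneg: "exw e \<ge> 0"
  by (simp add: exw_def)

lemma edge_at_inner: "e \<in> exE \<Longrightarrow> (i, Suc s) \<in> e \<Longrightarrow> e = pedge i s \<or> e = pedge i (Suc s)"
  by (auto simp: exE_def mem_pedge)

definition inner_verts :: "nat \<Rightarrow> (nat \<times> nat) set" where
  "inner_verts i = {(i, t) | t. 1 \<le> t \<and> t \<le> 2 * i}"

definition odd_edges :: "nat \<Rightarrow> (nat \<times> nat) set set" where
  "odd_edges i = (\<lambda>r. pedge i (2 * r + 1)) ` {..<i}"

definition even_edges :: "nat \<Rightarrow> (nat \<times> nat) set set" where
  "even_edges i = (\<lambda>r. pedge i (2 * r)) ` {..<i}"

lemma exV_eq: "exV = insert (0, 0) (\<Union>i\<in>{1..}. inner_verts i)"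
  by (auto simp: exV_iff inner_verts_def)

lemma card_inner_verts: "card (inner_verts i) = 2 * i"
proof -
  have "inner_verts i = Pair i ` {1..2 * i}"
    by (auto simp: inner_verts_def)
  then show ?thesis by (simp add: card_image inj_on_def)
qed

lemma pedge_subset_inner: "0 < t \<Longrightarrow> t < 2 * i \<Longrightarrow> pedge i t \<subseteq> inner_verts i"
  by (auto simp: pedge_eq inner_verts_def)

lemma Union_odd_edges: "\<Union>(odd_edges i) = inner_verts i"
proof
  show "\<Union>(odd_edges i) \<subseteq> inner_verts i"
    by (auto simp: odd_edges_def pedge_eq inner_verts_def)
next
  show "inner_verts i \<subseteq> \<Union>(odd_edges i)"
  proof
    fix x assume "x \<in> inner_verts i"
    then obtain t where x: "x = (i, t)" "1 \<le> t" "t \<le> 2 * i"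
      by (auto simp: inner_verts_def)
    have "x \<in> pedge i (2 * ((t - 1) div 2) + 1)"
      using x by (auto simp: pedge_eq)
    moreover have "(t - 1) div 2 < i" using x by auto
    ultimately show "x \<in> \<Union>(odd_edges i)" by (auto simp: odd_edges_def)
  qed
qed

lemma Union_even_edges:
  assumes "1 \<le> i"
  shows "\<Union>(even_edges i) = insert (0, 0) (inner_verts i - {(i, 2 * i)})"
proof
  show "\<Union>(even_edges i) \<subseteq> insert (0, 0) (inner_verts i - {(i, 2 * i)})"
    by (auto simp: even_edges_def pedge_eq inner_verts_def split: if_splits; presburger)
next
  show "insert (0, 0) (inner_verts i - {(i, 2 * i)}) \<subseteq> \<Union>(even_edges i)"
  proof
    fix x assume x: "x \<in> insert (0, 0) (inner_verts i - {(i, 2 * i)})"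
    show "x \<in> \<Union>(even_edges i)"
    proof (cases "x = (0, 0)")
      case True
      have "pedge i (2 * 0) \<in> even_edges i"
        unfolding even_edges_def using assms by (intro imageI) simp
      moreover have "(0, 0) \<in> pedge i (2 * 0)" by (simp add: pedge_eq)
      ultimately show ?thesis using True by blast
    next
      case False
      then obtain t where t: "x = (i, t)" "1 \<le> t" "t < 2 * i"
        using x by (auto simp: inner_verts_def less_le)
      have "x \<in> pedge i (2 * (t div 2))"
      proof (cases "even t")
        case True
        then show ?thesis using t by (auto simp: pedge_eq)
      next
        case False
        then have "t = Suc (2 * (t div 2))" by presburger
        then show ?thesis using t(1) by (simp add: pedge_eq)
      qed
      moreover have "pedge i (2 * (t div 2)) \<in> even_edges i"
        using t by (simp add: even_edges_def)
      ultimately show ?thesis by blast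
    qed
  qed
qed

lemma odd_edges_exE: "odd_edges i \<subseteq> exE" and even_edges_exE: "even_edges i \<subseteq> exE"
  by (auto simp: odd_edges_def even_edges_def pedge_in_exE)

lemma wsum_odd_edges: "wsum exw (odd_edges i) = i"
proof -
  have "inj_on (\<lambda>r. pedge i (2 * r + 1)) {..<i}"
    by (auto intro: inj_onI simp: pedge_inj)
  then have "wsum exw (odd_edges i) = (\<Sum>r<i. exw (pedge i (2 * r + 1)))"
    unfolding wsum_def odd_edges_def by (simp add: sum.reindex)
  also have "\<dots> = (\<Sum>r<i. 1)"
    by (intro sum.cong) (auto simp: exw_pedge)
  finally show ?thesis by simp
qed

lemma wsum_even_edges: "wsum exw (even_edges i) = 0"
  unfolding wsum_def even_edges_def by (intro sum.neutral) (auto simp: exw_pedge)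

lemma odd_pedges_meet: "x \<in> pedge i (2 * r + 1) \<Longrightarrow> x \<in> pedge i' (2 * r' + 1) \<Longrightarrow> i = i' \<and> r = r'"
  by (auto simp: mem_pedge)

lemma even_pedges_meet: "x \<in> pedge i (2 * r) \<Longrightarrow> x \<in> pedge i (2 * r') \<Longrightarrow> r = r'"
  by (auto simp: mem_pedge)

lemma odd_even_pedges_meet: "x \<in> pedge i (2 * r + 1) \<Longrightarrow> x \<in> pedge k (2 * r') \<Longrightarrow> i = k"
  by (auto simp: mem_pedge)

lemma matching_odd_edges: "matching exE (\<Union>i\<in>I. odd_edges i)"
proof (rule matchingI)
  show "(\<Union>i\<in>I. odd_edges i) \<subseteq> exE" using odd_edges_exE by blast
next
  fix e f x assume "e \<in> (\<Union>i\<in>I. odd_edges i)" "f \<in> (\<Union>i\<in>I. odd_edges i)" "x \<in> e" "x \<in> f"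
  then show "e = f" unfolding odd_edges_def by (blast dest: odd_pedges_meet)
qed

lemma matching_odd_even:
  assumes "j \<noteq> k"
  shows "matching exE (odd_edges j \<union> even_edges k)"
proof (rule matchingI)
  show "odd_edges j \<union> even_edges k \<subseteq> exE" using odd_edges_exE even_edges_exE by blast
next
  fix e f x assume "e \<in> odd_edges j \<union> even_edges k" "f \<in> odd_edges j \<union> even_edges k"
    "x \<in> e" "x \<in> f"
  then show "e = f" using assms unfolding odd_edges_def even_edges_def
    by (blast dest: odd_pedges_meet even_pedges_meet odd_even_pedges_meet)
qed

lemma card_pedge: "card (pedge i t) = 2"
  by (simp add: pedge_eq)

lemma covered_inner_verts:
  assumes M: "matching exE M" and start: "pedge i 0 \<notin> M"
  shows "inner_verts i \<inter> \<Union>M = \<Union>{e \<in> M. e \<subseteq> inner_verts i}"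
proof
  show "inner_verts i \<inter> \<Union>M \<subseteq> \<Union>{e \<in> M. e \<subseteq> inner_verts i}"
  proof
    fix x assume "x \<in> inner_verts i \<inter> \<Union>M"
    then obtain t e where x: "x = (i, Suc t)" "e \<in> M" "x \<in> e"
      by (auto simp: inner_verts_def Suc_le_eq dest!: gr0_implies_Suc)
    have "e \<in> exE" using M x(2) by (rule matching_edge_in)
    then have "e = pedge i t \<or> e = pedge i (Suc t)"
      using edge_at_inner x by blast
    then obtain s where s: "e = pedge i s" "0 < s"
      using start x(2) by (metis gr0I zero_less_Suc)
    then have "s < 2 * i" using \<open>e \<in> exE\<close> by (simp add: pedge_in_exE)
    then have "e \<subseteq> inner_verts i" using pedge_subset_inner s by blast
    then show "x \<in> \<Union>{e \<in> M. e \<subseteq> inner_verts i}" using x by blast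
  qed
qed blast

text \<open>Parity: those edges inside P_i cover an even number of its 2i inner vertices, so a
  matching cannot miss exactly one of them.\<close>
lemma inner_verts_covered:
  assumes M: "matching exE M" and "1 \<le> i" and start: "pedge i 0 \<notin> M"
    and almost: "inner_verts i - \<Union>M \<subseteq> {v}"
  shows "inner_verts i \<subseteq> \<Union>M"
proof (rule ccontr)
  assume "\<not> inner_verts i \<subseteq> \<Union>M"
  with almost have v: "v \<in> inner_verts i" "inner_verts i \<inter> \<Union>M = inner_verts i - {v}"
    by blast+
  let ?S = "{e \<in> M. e \<subseteq> inner_verts i}"
  have "?S \<subseteq> pedge i ` {..<2 * i}"
  proof
    fix e assume e: "e \<in> ?S"
    then obtain i' s where "e = pedge i' s" "s < 2 * i'"
      using matching_edge_in[OF M] unfolding exE_def by blast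
    moreover have "(i', Suc s) \<in> inner_verts i" using e calculation(1) by (auto simp: pedge_eq)
    ultimately show "e \<in> pedge i ` {..<2 * i}" by (auto simp: inner_verts_def)
  qed
  then have "finite ?S" by (rule finite_subset) simp
  moreover have "matching exE ?S" "\<forall>e\<in>?S. card e = 2"
    using M unfolding matching_def exE_def by (auto simp: card_pedge)
  ultimately have "card (\<Union>?S) = 2 * card ?S" by (intro card_Union_matching)
  then have "card (inner_verts i - {v}) = 2 * card ?S"
    using covered_inner_verts[OF M start] v(2) by simp
  moreover have "card (inner_verts i - {v}) = 2 * i - 1"
    using v(1) by (simp add: card_inner_verts)
  ultimately show False using \<open>1 \<le> i\<close> by presburger
qed

text \<open>Once all inner vertices of P_i are covered without the first edge, the matching is
  forced, edge by edge from the hub outwards, to contain all odd edges of P_i.\<close>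
lemma odd_edges_forced:
  assumes M: "matching exE M" and start: "pedge i 0 \<notin> M"
    and covered: "inner_verts i \<subseteq> \<Union>M"
  shows "odd_edges i \<subseteq> M"
proof -
  have edge_at: "\<exists>e\<in>M. (i, t) \<in> e \<and> e \<in> exE" if "1 \<le> t" "t \<le> 2 * i" for t
  proof -
    have "(i, t) \<in> \<Union>M" using that covered unfolding inner_verts_def by blast
    then show ?thesis using matching_edge_in[OF M] by blast
  qed
  have "pedge i (2 * r + 1) \<in> M" if "r < i" for r
    using that
  proof (induction r)
    case 0
    then obtain e where "e \<in> M" "(i, Suc 0) \<in> e" "e \<in> exE" using edge_at[of 1] by auto
    then show ?case using edge_at_inner[of e i 0] start by auto
  next
    case (Suc r)
    then have prev: "pedge i (2 * r + 1) \<in> M" by simp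
    obtain e where e: "e \<in> M" "(i, Suc (2 * r + 2)) \<in> e" "e \<in> exE"
      using edge_at[of "Suc (2 * r + 2)"] Suc.prems by auto
    have "e \<noteq> pedge i (2 * r + 2)"
    proof
      assume "e = pedge i (2 * r + 2)"
      moreover have "(i, 2 * r + 2) \<in> pedge i (2 * r + 1)" "(i, 2 * r + 2) \<in> pedge i (2 * r + 2)"
        by (simp_all add: pedge_eq)
      ultimately have "pedge i (2 * r + 1) = pedge i (2 * r + 2)"
        using matching_edge_unique[OF M prev e(1)] by blast
      then show False by (simp add: pedge_inj)
    qed
    then show ?case using edge_at_inner[OF e(3) e(2)] e(1) by auto
  qed
  then show ?thesis unfolding odd_edges_def by blast
qed

lemma swap_first_edge_uncovered:
  assumes M: "matching exE M" and hub: "(0, 0) \<notin> \<Union>M"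
    and covered: "exV - {(0, 0)} \<subseteq> \<Union>M" and last: "pedge 1 1 \<in> M"
  shows "exV - \<Union>(swap M {pedge 1 0}) = {(1, 2)}"
proof (intro equalityI subsetI)
  have UB: "\<Union>{pedge 1 0} = {(0, 0), (1, 1)}" by (auto simp: pedge_eq)
  fix x assume x: "x \<in> exV - \<Union>(swap M {pedge 1 0})"
  then have xB: "x \<notin> {(0, 0), (1, 1)}" and kept: "\<forall>f\<in>M. x \<in> f \<longrightarrow> f \<inter> {(0, 0), (1, 1)} \<noteq> {}"
    unfolding Diff_iff mem_Union_swap UB by blast+
  then obtain f where f: "f \<in> M" "x \<in> f" using covered x by blast
  with kept hub have "(1, Suc 0) \<in> f" by auto
  moreover have "(1, Suc 0) \<in> pedge 1 1" by (simp add: pedge_eq)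
  ultimately have "f = pedge 1 1" using matching_edge_unique[OF M f(1) last] by blast
  then show "x \<in> {(1, 2)}" using f(2) xB by (auto simp: pedge_eq)
next
  fix x assume x: "x \<in> {(1::nat, 2::nat)}"
  have "f \<inter> \<Union>{pedge 1 0} \<noteq> {}" if "f \<in> M" "(1, Suc 1) \<in> f" for f
  proof -
    have "f \<in> exE" using M that(1) by (rule matching_edge_in)
    then have "f = pedge 1 1" using edge_at_inner[OF _ that(2)] by (auto simp: pedge_in_exE)
    then show ?thesis by (simp add: pedge_eq)
  qed
  moreover have "(1::nat, 2::nat) \<in> exV" "(1::nat, 2::nat) \<notin> \<Union>{pedge 1 0}"
    by (simp_all add: exV_iff pedge_eq)
  ultimately show "x \<in> exV - \<Union>(swap M {pedge 1 0})"
    using x unfolding Diff_iff mem_Union_swap by (simp add: numeral_2_eq_2)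
qed

text \<open>Case (a): the swap trades the weight-1 edge (1,1)-(1,2) for the weight-0 edge u-(1,1).\<close>
lemma improvement_hub_uncovered:
  assumes M: "matching exE M" and almost: "exV - \<Union>M \<subseteq> {v}" and hub: "(0, 0) \<notin> \<Union>M"
  shows "\<not> strongly_w_minimal exV exE exw M"
proof -
  have "(0, 0) \<in> exV" by (simp add: exV_iff)
  then have covered: "exV - {(0, 0)} \<subseteq> \<Union>M" using almost hub by blast
  have "(1, Suc 0) \<in> exV - {(0, 0)}" by (simp add: exV_iff)
  then obtain e where e: "e \<in> M" "(1, Suc 0) \<in> e" using covered by blast
  moreover have "e \<noteq> pedge 1 0" using hub e(1) by (auto simp: pedge_eq)
  ultimately have last: "pedge 1 1 \<in> M"
    using edge_at_inner[OF matching_edge_in[OF M e(1)] e(2)] by auto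
  have F: "{pedge 1 1} \<subseteq> displaced M {pedge 1 0} - {pedge 1 0}"
    using last by (auto simp: displaced_def pedge_eq)
  have B: "matching exE {pedge 1 0}"
    by (rule matchingI) (auto simp: pedge_in_exE)
  have lighter: "wsum exw {pedge 1 0} < wsum exw {pedge 1 1}"
    by (simp add: wsum_def exw_pedge)
  show ?thesis
    using swap_improves[OF M B _ _ _ swap_first_edge_uncovered[OF M hub covered last] F lighter]
      exw_nonneg by (simp add: pedge_eq)
qed

lemma other_first_edges:
  assumes M: "matching exE M" and hub: "pedge j 0 \<in> M" and "i \<noteq> j"
  shows "pedge i 0 \<notin> M"
proof
  assume "pedge i 0 \<in> M"
  moreover have "(0, 0) \<in> pedge i 0" "(0, 0) \<in> pedge j 0" by (simp_all add: pedge_eq)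
  ultimately have "pedge i 0 = pedge j 0" using matching_edge_unique[OF M _ hub] by blast
  then show False using \<open>i \<noteq> j\<close> by (simp add: pedge_inj)
qed

lemma Union_odd_even:
  assumes "1 \<le> k"
  shows "\<Union>(odd_edges j \<union> even_edges k) = insert (0, 0) (inner_verts j \<union> (inner_verts k - {(k, 2 * k)}))"
  using Union_odd_edges[of j] Union_even_edges[OF assms] by auto

lemma swap_odd_even_covers:
  assumes M: "matching exE M" and k: "1 \<le> k" "j \<noteq> k"
    and start: "\<And>i. i \<noteq> j \<Longrightarrow> pedge i 0 \<notin> M"
    and covered: "\<And>i. 1 \<le> i \<Longrightarrow> i \<noteq> j \<Longrightarrow> inner_verts i \<subseteq> \<Union>M"
    and x: "x \<in> exV" "x \<noteq> (k, 2 * k)"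
  shows "x \<in> \<Union>(swap M (odd_edges j \<union> even_edges k))"
proof (cases "x \<in> \<Union>(odd_edges j \<union> even_edges k)")
  case False
  let ?B = "odd_edges j \<union> even_edges k"
  obtain a b where ab: "x = (a, b)" by fastforce
  then have a: "1 \<le> a" "a \<noteq> j" "a \<noteq> k" and "x \<in> inner_verts a"
    using x False unfolding Union_odd_even[OF k(1)] by (auto simp: exV_iff inner_verts_def)
  then obtain f where f: "f \<in> M" "x \<in> f" using covered by blast
  obtain m where "x = (a, Suc m)"
    using ab \<open>x \<in> inner_verts a\<close> by (cases b) (auto simp: inner_verts_def)
  then obtain s where s: "f = pedge a s"
    using edge_at_inner[OF matching_edge_in[OF M f(1)]] f(2) by blast
  have "f \<inter> \<Union>?B = {}"
  proof (rule ccontr)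
    assume "f \<inter> \<Union>?B \<noteq> {}"
    then obtain y where y: "y \<in> f" "y \<in> \<Union>?B" by blast
    then consider "y = (0, 0)" "s = 0" | "fst y = a"
      unfolding s by (auto simp: mem_pedge)
    then show False
    proof cases
      case 1
      then show False using f(1) s start[OF a(2)] by simp
    next
      case 2
      then show False using y(2) a unfolding Union_odd_even[OF k(1)] by (auto simp: inner_verts_def)
    qed
  qed
  then show ?thesis using f unfolding mem_Union_swap by blast
qed (subst mem_Union_swap, blast)

text \<open>... while (k,2k) itself is uncovered: its only edge in the graph starts at (k,2k-1),
  which the replacement covers.\<close>
lemma swap_odd_even_misses:
  assumes M: "matching exE M" and k: "1 \<le> k" "j \<noteq> k"
  shows "(k, 2 * k) \<notin> \<Union>(swap M (odd_edges j \<union> even_edges k))"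
proof -
  let ?B = "odd_edges j \<union> even_edges k"
  have "f \<inter> \<Union>?B \<noteq> {}" if "f \<in> M" "(k, Suc (2 * k - 1)) \<in> f" for f
  proof -
    have "f \<in> exE" using M that(1) by (rule matching_edge_in)
    moreover have "Suc (2 * k - 1) = 2 * k" using k(1) by simp
    ultimately have "f = pedge k (2 * k - 1)"
      using edge_at_inner[OF _ that(2)] by (auto simp: pedge_in_exE)
    moreover have "(k, 2 * k - 1) \<in> \<Union>?B"
      using k(1) unfolding Union_odd_even[OF k(1)] by (auto simp: inner_verts_def)
    ultimately show ?thesis using k(1) by (auto simp: pedge_eq)
  qed
  moreover have "(k, 2 * k) \<notin> \<Union>?B"
    using k unfolding Union_odd_even[OF k(1)] by (auto simp: inner_verts_def)
  ultimately show ?thesis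
    using k(1) unfolding mem_Union_swap by (auto simp: Suc_diff_1)
qed

lemma odd_edges_displaced:
  assumes k: "1 \<le> k" "j \<noteq> k" and forced: "odd_edges k \<subseteq> M"
  shows "odd_edges k \<subseteq> displaced M (odd_edges j \<union> even_edges k) - (odd_edges j \<union> even_edges k)"
proof
  let ?B = "odd_edges j \<union> even_edges k"
  fix e assume e: "e \<in> odd_edges k"
  then obtain r where r: "r < k" "e = pedge k (2 * r + 1)" by (auto simp: odd_edges_def)
  have "(k, 2 * r + 1) \<in> e \<inter> \<Union>?B"
    using r unfolding Union_odd_even[OF k(1)] by (auto simp: pedge_eq inner_verts_def)
  moreover have "e \<notin> ?B"
    using r k(2) by (auto simp: odd_edges_def even_edges_def pedge_inj) presburger
  ultimately show "e \<in> displaced M ?B - ?B"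
    using forced e unfolding displaced_def by blast
qed

lemma wsum_odd_even:
  assumes "j \<noteq> k"
  shows "wsum exw (odd_edges j \<union> even_edges k) = j"
proof -
  have "odd_edges j \<inter> even_edges k = {}"
    using assms by (auto simp: odd_edges_def even_edges_def pedge_inj)
  then have "wsum exw (odd_edges j \<union> even_edges k) = wsum exw (odd_edges j) + wsum exw (even_edges k)"
    unfolding wsum_def by (intro sum.union_disjoint) (auto simp: odd_edges_def even_edges_def)
  then show ?thesis by (simp add: wsum_odd_edges wsum_even_edges)
qed

lemma improvement_hub_covered:
  assumes M: "matching exE M" and almost: "exV - \<Union>M \<subseteq> {v}" and hub: "pedge j 0 \<in> M"
  shows "\<not> strongly_w_minimal exV exE exw M"
proof -
  define k where "k = Suc j"
  have k: "1 \<le> k" "j \<noteq> k" "k \<noteq> j" unfolding k_def by simp_all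
  note start = other_first_edges[OF M hub]
  have covered: "inner_verts i \<subseteq> \<Union>M" if "1 \<le> i" "i \<noteq> j" for i
  proof -
    have "inner_verts i \<subseteq> exV" using that(1) by (auto simp: inner_verts_def exV_iff)
    then show ?thesis using inner_verts_covered[OF M that(1) start[OF that(2)]] almost by blast
  qed
  let ?B = "odd_edges j \<union> even_edges k"
  have "exV - \<Union>(swap M ?B) = {(k, 2 * k)}"
  proof (intro equalityI subsetI)
    fix x assume "x \<in> exV - \<Union>(swap M ?B)"
    then show "x \<in> {(k, 2 * k)}" using swap_odd_even_covers[OF M k(1,2) start covered] by blast
  next
    fix x assume "x \<in> {(k, 2 * k)}"
    moreover have "(k, 2 * k) \<in> exV" using k(1) by (simp add: exV_iff)
    ultimately show "x \<in> exV - \<Union>(swap M ?B)" using swap_odd_even_misses[OF M k(1,2)] by blast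
  qed
  moreover have "odd_edges k \<subseteq> displaced M ?B - ?B"
    using odd_edges_displaced[OF k(1,2) odd_edges_forced[OF M start covered]] k by blast
  moreover have "wsum exw ?B < wsum exw (odd_edges k)"
    using wsum_odd_even[OF k(2)] wsum_odd_edges[of k] unfolding k_def by simp
  moreover have "finite ?B" "\<forall>e\<in>?B. finite e"
    by (auto simp: odd_edges_def even_edges_def pedge_eq)
  ultimately show ?thesis
    using swap_improves[OF M matching_odd_even[OF k(2)]] exw_nonneg by blast
qed

lemma hub_edge: "e \<in> exE \<Longrightarrow> (0, 0) \<in> e \<Longrightarrow> \<exists>j. e = pedge j 0"
  by (auto simp: exE_def mem_pedge)

lemma not_strongly_minimal: "\<not> strongly_w_minimal exV exE exw M"
proof
  assume min: "strongly_w_minimal exV exE exw M"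
  then have pm: "perfect_matching exV exE M \<or> almost_perfect_matching exV exE M"
    unfolding strongly_w_minimal_def by blast
  then have M: "matching exE M"
    unfolding perfect_matching_def almost_perfect_matching_def by blast
  obtain v where almost: "exV - \<Union>M \<subseteq> {v}"
    using pm unfolding perfect_matching_def almost_perfect_matching_def by blast
  show False
  proof (cases "(0, 0) \<in> \<Union>M")
    case True
    then obtain e where "e \<in> M" "(0, 0) \<in> e" by blast
    moreover from this have "e \<in> exE" using M unfolding matching_def by blast
    ultimately obtain j where "pedge j 0 \<in> M" using hub_edge by blast
    then show False using improvement_hub_covered[OF M almost] min by blast
  next
    case False
    then show False using improvement_hub_uncovered[OF M almost] min by blast
  qed
qed

lemma almost_perfect_odd_edges:
  "almost_perfect_matching exV exE (\<Union>i\<in>{1..}. odd_edges i)"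
proof -
  have "\<Union>(\<Union>i\<in>{1..}. odd_edges i) = (\<Union>i\<in>{1..}. inner_verts i)"
    unfolding Union_odd_edges[symmetric] by blast
  moreover have "(0, 0) \<notin> (\<Union>i\<in>{1..}. inner_verts i)"
    by (auto simp: inner_verts_def)
  ultimately have "exV - \<Union>(\<Union>i\<in>{1..}. odd_edges i) = {(0, 0)}"
    unfolding exV_eq by blast
  then show ?thesis
    using matching_odd_edges unfolding almost_perfect_matching_def by blast
qed

theorem mainTheorem7:
  shows "(\<exists>M. almost_perfect_matching exV exE M) \<and>
         \<not> (\<exists>M. strongly_w_minimal exV exE exw M)"
  using almost_perfect_odd_edges not_strongly_minimal by blast

end
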